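(* Let $(X,d_X,\mu_X)$ be a compact metric measure space whose measure $\mu_X$ is strictly positive. Then the distance kernel embedding $\Phi:X\to\mathbb{C}^\infty$ is injective.
   Context: A metric measure space carries a Radon Borel measure; it is strictly positive if every nonempty open set has positive measure. The distance kernel operator $(D^Xf)(x)=\int_X f(y)d_X(x,y)\,d\mu_X(y)$ on $L^2(X,\mu_X)$ is compact self-adjoint; let $\phi_i$ be an orthonormal basis of real eigenfunctions with eigenvalues $\lambda_i$ ordered by decreasing absolute value (non-zero eigenvalues of multiplicity one, signs fixed by a convention). Set $\alpha_i=\sqrt{\lambda_i}\phi_i$ (square root with positive imaginary part if $\lambda_i<0$; eigenfunctions in the zero eigenspace replaced by the zero function). $\Phi(x)=(\alpha_1(x),\alpha_2(x),\dots)\in\mathbb{C}^\infty$. *)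

theory Defs
  imports "HOL-Analysis.Analysis"
begin

definition strictly_positive_measure :: "'a::metric_space measure \<Rightarrow> bool" where
  "strictly_positive_measure M \<longleftrightarrow>
     (\<forall>U. open U \<longrightarrow> U \<inter> space M \<noteq> {} \<longrightarrow> emeasure M (U \<inter> space M) > 0)"

text \<open>Compact metric measure space with a (finite, hence Radon) Borel measure.\<close>
definition compact_mm_space :: "'a::metric_space measure \<Rightarrow> bool" where
  "compact_mm_space M \<longleftrightarrow> compact (space M)
     \<and> sets M = sets (restrict_space borel (space M)) \<and> finite_measure M"

definition dist_kernel_op :: "'a::metric_space measure \<Rightarrow> ('a \<Rightarrow> real) \<Rightarrow> 'a \<Rightarrow> real" where
  "dist_kernel_op M f x = (\<integral>y. f y * dist x y \<partial>M)"

definition square_integrable :: "'a measure \<Rightarrow> ('a \<Rightarrow> real) \<Rightarrow> bool" where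
  "square_integrable M f \<longleftrightarrow> f \<in> borel_measurable M \<and> integrable M (\<lambda>x. (f x)\<^sup>2)"

definition dist_kernel_eigenbasis ::
  "'a::metric_space measure \<Rightarrow> nat set \<Rightarrow> (nat \<Rightarrow> 'a \<Rightarrow> real) \<Rightarrow> (nat \<Rightarrow> real) \<Rightarrow> bool" where
  "dist_kernel_eigenbasis M I phi lam \<longleftrightarrow>
     (\<forall>i j. j \<in> I \<longrightarrow> i \<le> j \<longrightarrow> i \<in> I)
   \<and> (\<forall>i\<in>I. square_integrable M (phi i))
   \<and> (\<forall>i\<in>I. \<forall>j\<in>I. (\<integral>x. phi i x * phi j x \<partial>M) = (if i = j then 1 else 0))
   \<and> (\<forall>f. square_integrable M f \<longrightarrow> (\<forall>i\<in>I. (\<integral>x. f x * phi i x \<partial>M) = 0)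
          \<longrightarrow> (AE x in M. f x = 0))
   \<and> (\<forall>i\<in>I. AE x in M. dist_kernel_op M (phi i) x = lam i * phi i x)
   \<and> (\<forall>i\<in>I. \<forall>j\<in>I. i \<le> j \<longrightarrow> \<bar>lam j\<bar> \<le> \<bar>lam i\<bar>)
   \<and> (\<forall>i\<in>I. \<forall>j\<in>I. i \<noteq> j \<longrightarrow> lam i \<noteq> 0 \<longrightarrow> lam i \<noteq> lam j)"

text \<open>alpha_i = sqrt(lam_i) phi_i, using for lam_i \<noteq> 0 the canonical (continuous)
representative phi_i = D^X phi_i / lam_i; zero-eigenvalue eigenfunctions are replaced by 0.
csqrt of a negative real has positive imaginary part.\<close>
definition dk_alpha :: "'a::metric_space measure \<Rightarrow> (nat \<Rightarrow> 'a \<Rightarrow> real) \<Rightarrow> (nat \<Rightarrow> real)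
    \<Rightarrow> nat \<Rightarrow> 'a \<Rightarrow> complex" where
  "dk_alpha M phi lam i x =
     (if lam i = 0 then 0
      else csqrt (complex_of_real (lam i)) * complex_of_real (dist_kernel_op M (phi i) x / lam i))"

definition dk_embedding :: "'a::metric_space measure \<Rightarrow> nat set \<Rightarrow> (nat \<Rightarrow> 'a \<Rightarrow> real)
    \<Rightarrow> (nat \<Rightarrow> real) \<Rightarrow> 'a \<Rightarrow> (nat \<Rightarrow> complex)" where
  "dk_embedding M I phi lam x = (\<lambda>i. if i \<in> I then dk_alpha M phi lam i x else 0)"

end

theory Submission
  imports Defs
begin

text \<open>If \<open>\<Phi> x = \<Phi> x'\<close>, then \<open>D\<phi>\<^sub>i x = D\<phi>\<^sub>i x'\<close> for every \<open>i\<close>: for \<open>\<lambda>\<^sub>i \<noteq> 0\<close> this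
  is read off the \<open>i\<close>-th coordinate, and for \<open>\<lambda>\<^sub>i = 0\<close> the continuous function \<open>D\<phi>\<^sub>i\<close>
  vanishes almost everywhere, hence everywhere because the measure is strictly positive.
  Consequently \<open>g = d(x,\<cdot>) - d(x',\<cdot>)\<close> is orthogonal to the whole eigenbasis, so \<open>g = 0\<close>
  almost everywhere and, being continuous, everywhere; finally \<open>g x = - d(x',x)\<close>.\<close>

lemma borel_measurable_continuous_on_space:
  assumes "sets M = sets (restrict_space borel (space M))"
    and "continuous_on (space M) g"
  shows "g \<in> borel_measurable M"
  unfolding measurable_cong_sets[OF assms(1) refl]
  by (rule borel_measurable_continuous_on_restrict[OF assms(2)])

lemma continuous_AE_eq_0_imp_eq_0:
  fixes f :: "'a::metric_space \<Rightarrow> real"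
  assumes sets: "sets M = sets (restrict_space borel (space M))"
    and pos: "strictly_positive_measure M"
    and cont: "continuous_on (space M) f"
    and ae: "AE y in M. f y = 0"
    and x: "x \<in> space M"
  shows "f x = 0"
proof (rule ccontr)
  assume "f x \<noteq> 0"
  with cont x obtain d where "d > 0"
    and d: "\<forall>y\<in>space M. dist y x < d \<longrightarrow> dist (f y) (f x) < \<bar>f x\<bar>"
    unfolding continuous_on_iff by (metis zero_less_abs_iff)
  define U where "U = ball x d \<inter> space M"
  have "U \<subseteq> {y\<in>space M. f y \<noteq> 0}"
    using d by (auto simp: U_def dist_commute dist_real_def)
  moreover have "U \<in> sets M"
    unfolding U_def sets sets_restrict_space by (auto intro!: image_eqI[where x="ball x d"])
  moreover obtain N where "{y\<in>space M. \<not> f y = 0} \<subseteq> N" "N \<in> sets M" "emeasure M N = 0"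
    using ae by (rule AE_E)
  ultimately have "emeasure M U = 0"
    by (metis emeasure_mono le_zero_eq order_trans)
  moreover have "emeasure M U > 0"
    using pos x \<open>d > 0\<close> unfolding strictly_positive_measure_def U_def
    by (metis Int_iff centre_in_ball empty_iff open_ball)
  ultimately show False by simp
qed

lemma integrable_mult_bounded:
  fixes f g :: "'a \<Rightarrow> real"
  assumes f: "integrable M f" and g: "g \<in> borel_measurable M"
    and bound: "AE y in M. \<bar>g y\<bar> \<le> B"
  shows "integrable M (\<lambda>y. f y * g y)"
proof (rule Bochner_Integration.integrable_bound)
  show "integrable M (\<lambda>y. B * f y)" using f by simp
  show "(\<lambda>y. f y * g y) \<in> borel_measurable M" using f g by auto
  show "AE y in M. norm (f y * g y) \<le> norm (B * f y)"
    using bound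
  proof eventually_elim
    case (elim y)
    then have "\<bar>f y\<bar> * \<bar>g y\<bar> \<le> \<bar>f y\<bar> * \<bar>B\<bar>" by (intro mult_left_mono) auto
    then show ?case by (simp add: abs_mult mult.commute)
  qed
qed

lemma integrable_mult_dist:
  fixes f :: "'a::metric_space \<Rightarrow> real"
  assumes sets: "sets M = sets (restrict_space borel (space M))"
    and bdd: "bounded (space M)"
    and f: "integrable M f"
  shows "integrable M (\<lambda>y. f y * dist z y)"
proof -
  obtain B where "\<forall>y\<in>space M. dist z y \<le> B"
    using bdd unfolding bounded_any_center[of _ z] by blast
  then have "AE y in M. \<bar>dist z y\<bar> \<le> B" by auto
  moreover have "(\<lambda>y. dist z y) \<in> borel_measurable M"
    by (intro borel_measurable_continuous_on_space[OF sets] continuous_intros)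
  ultimately show ?thesis
    using integrable_mult_bounded[OF f] by blast
qed

lemma dist_kernel_op_diff:
  fixes f :: "'a::metric_space \<Rightarrow> real"
  assumes "sets M = sets (restrict_space borel (space M))"
    and "bounded (space M)"
    and "integrable M f"
  shows "dist_kernel_op M f x - dist_kernel_op M f x' = (\<integral>y. f y * (dist x y - dist x' y) \<partial>M)"
  using integrable_mult_dist[OF assms, of x] integrable_mult_dist[OF assms, of x']
  by (simp add: dist_kernel_op_def right_diff_distrib)

lemma lipschitz_on_dist_kernel_op:
  fixes f :: "'a::metric_space \<Rightarrow> real"
  assumes sets: "sets M = sets (restrict_space borel (space M))"
    and bdd: "bounded (space M)"
    and f: "integrable M f"
  shows "(\<integral>y. \<bar>f y\<bar> \<partial>M)-lipschitz_on (space M) (dist_kernel_op M f)"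
proof (rule lipschitz_onI)
  fix x x' assume "x \<in> space M" "x' \<in> space M"
  have bound: "\<bar>f y * (dist x y - dist x' y)\<bar> \<le> \<bar>f y\<bar> * dist x x'" for y
    using abs_dist_diff_le[of x y x'] by (auto simp: abs_mult dist_commute intro: mult_left_mono)
  have "dist (dist_kernel_op M f x) (dist_kernel_op M f x')
      = \<bar>\<integral>y. f y * (dist x y - dist x' y) \<partial>M\<bar>"
    by (simp add: dist_real_def dist_kernel_op_diff[OF assms])
  also have "\<dots> \<le> (\<integral>y. \<bar>f y * (dist x y - dist x' y)\<bar> \<partial>M)"
    by (rule integral_abs_bound)
  also have "\<dots> \<le> (\<integral>y. \<bar>f y\<bar> * dist x x' \<partial>M)"
    using bound integrable_mult_dist[OF assms, of x] integrable_mult_dist[OF assms, of x'] f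
    by (intro integral_mono) (auto simp: right_diff_distrib)
  finally show "dist (dist_kernel_op M f x) (dist_kernel_op M f x')
      \<le> (\<integral>y. \<bar>f y\<bar> \<partial>M) * dist x x'"
    by simp
qed simp

lemma square_integrable_dist_diff:
  fixes x x' :: "'a::metric_space"
  assumes sets: "sets M = sets (restrict_space borel (space M))"
    and "finite_measure M"
  shows "square_integrable M (\<lambda>y. dist x y - dist x' y)"
proof -
  interpret finite_measure M by fact
  have meas: "(\<lambda>y. dist x y - dist x' y) \<in> borel_measurable M"
    by (intro borel_measurable_continuous_on_space[OF sets] continuous_intros)
  have "\<bar>dist x y - dist x' y\<bar>\<^sup>2 \<le> (dist x x')\<^sup>2" for y
    using abs_dist_diff_le[of x y x'] by (intro power_mono) (auto simp: dist_commute)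
  then have "integrable M (\<lambda>y. (dist x y - dist x' y)\<^sup>2)"
    using meas by (intro integrable_const_bound[where B="(dist x x')\<^sup>2"]) auto
  with meas show ?thesis
    unfolding square_integrable_def by blast
qed

lemma compact_mm_spaceD:
  assumes "compact_mm_space M"
  shows "sets M = sets (restrict_space borel (space M))"
    and "bounded (space M)"
    and "finite_measure M"
  using assms unfolding compact_mm_space_def by (auto intro: compact_imp_bounded)

lemma integrable_eigenfunction:
  assumes "finite_measure M"
    and "dist_kernel_eigenbasis M I phi lam"
    and "i \<in> I"
  shows "integrable M (phi i)"
proof -
  interpret finite_measure M by fact
  have "square_integrable M (phi i)"
    using assms(2,3) by (simp add: dist_kernel_eigenbasis_def)
  then show ?thesis
    unfolding square_integrable_def by (blast intro: square_integrable_imp_integrable)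
qed

lemma dist_kernel_op_eigenfunction_eq_0:
  assumes M: "compact_mm_space M"
    and pos: "strictly_positive_measure M"
    and eig: "dist_kernel_eigenbasis M I phi lam"
    and i: "i \<in> I" "lam i = 0"
    and x: "x \<in> space M"
  shows "dist_kernel_op M (phi i) x = 0"
proof -
  note sets = compact_mm_spaceD(1)[OF M] and bdd = compact_mm_spaceD(2)[OF M]
    and fin = compact_mm_spaceD(3)[OF M]
  have "continuous_on (space M) (dist_kernel_op M (phi i))"
    using lipschitz_on_dist_kernel_op[OF sets bdd integrable_eigenfunction[OF fin eig i(1)]]
    by (rule lipschitz_on_continuous_on)
  moreover have "AE y in M. dist_kernel_op M (phi i) y = 0"
    using eig i unfolding dist_kernel_eigenbasis_def by auto
  ultimately show ?thesis
    using continuous_AE_eq_0_imp_eq_0[OF sets pos] x by blast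
qed

lemma dk_embedding_eq_imp_dist_kernel_op_eq:
  assumes "compact_mm_space M" "strictly_positive_measure M" "dist_kernel_eigenbasis M I phi lam"
    and "x \<in> space M" "x' \<in> space M"
    and eq: "dk_embedding M I phi lam x = dk_embedding M I phi lam x'"
    and i: "i \<in> I"
  shows "dist_kernel_op M (phi i) x = dist_kernel_op M (phi i) x'"
proof (cases "lam i = 0")
  case True
  then show ?thesis
    using dist_kernel_op_eigenfunction_eq_0[OF assms(1-3) i] assms(4,5) by simp
next
  case False
  have "dk_alpha M phi lam i x = dk_alpha M phi lam i x'"
    using fun_cong[OF eq, of i] i by (simp add: dk_embedding_def)
  with False show ?thesis by (simp add: dk_alpha_def)
qed

lemma eigenbasis_orthogonal_imp_AE_eq_0:
  assumes "dist_kernel_eigenbasis M I phi lam"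
    and "square_integrable M f"
    and "\<And>i. i \<in> I \<Longrightarrow> (\<integral>y. f y * phi i y \<partial>M) = 0"
  shows "AE y in M. f y = 0"
  using assms by (simp add: dist_kernel_eigenbasis_def)

theorem lemma3p6:
  fixes M :: "'a::metric_space measure"
    and I :: "nat set" and phi :: "nat \<Rightarrow> 'a \<Rightarrow> real" and lam :: "nat \<Rightarrow> real"
  assumes "compact_mm_space M"
    and "strictly_positive_measure M"
    and "dist_kernel_eigenbasis M I phi lam"
  shows "inj_on (dk_embedding M I phi lam) (space M)"
proof (rule inj_onI)
  fix x x' assume x: "x \<in> space M" and x': "x' \<in> space M"
    and eq: "dk_embedding M I phi lam x = dk_embedding M I phi lam x'"
  note sets = compact_mm_spaceD(1)[OF assms(1)] and bdd = compact_mm_spaceD(2)[OF assms(1)]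
    and fin = compact_mm_spaceD(3)[OF assms(1)]
  define g where "g = (\<lambda>y. dist x y - dist x' y)"
  have "(\<integral>y. g y * phi i y \<partial>M) = 0" if i: "i \<in> I" for i
    using dist_kernel_op_diff[OF sets bdd integrable_eigenfunction[OF fin assms(3) i], of x x']
      dk_embedding_eq_imp_dist_kernel_op_eq[OF assms x x' eq i]
    by (simp add: g_def mult.commute)
  then have "AE y in M. g y = 0"
    using eigenbasis_orthogonal_imp_AE_eq_0[OF assms(3)] square_integrable_dist_diff[OF sets fin]
    unfolding g_def by blast
  moreover have "continuous_on (space M) g"
    unfolding g_def by (intro continuous_intros)
  ultimately have "g x = 0"
    using continuous_AE_eq_0_imp_eq_0[OF sets assms(2)] x by blast
  then show "x = x'" by (simp add: g_def)
qed

end
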